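(* Let $\alpha\in(0,1)$ and let $v(\beta)$, $\beta\in(1,1/\alpha)$, be defined by $$\frac1{v(\beta)}=\frac{\beta+1}{\beta-1}+\frac{1-\alpha}{1+\alpha}\left(\frac{\beta+3}{2(\beta-1)}+\frac{\beta(\beta+1)}{(\beta-1)^2}(s_+-s_-)+C\,s_-\right),$$ with $s_+=\frac{1-\alpha}{1-\alpha\beta}$, $s_-=\frac{1-\alpha}{1-\alpha/\beta}$, $C=\frac{2\beta}{\beta-1}-\frac{\beta-\alpha}{\beta-\alpha^2}$. Then $\frac{\partial v}{\partial\beta}>0$ at $\beta=\beta_c^{(2)}:=1/\sqrt{\alpha}$. Consequently $\beta_c^{(2)}<\beta_{\max}$, where $\beta_{\max}$ is the value of $\beta\in(1,1/\alpha)$ at which $v$ attains its maximum.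
   Context: $v(\beta)$ is the asymptotic speed of biased random walk on the random spanning tree of the ladder graph; $1/v$ is convex on $(1,1/\alpha)$, so $v$ is unimodal with a maximizer $\beta_{\max}$. *)

theory Defs
  imports "HOL-Analysis.Analysis"
begin

text \<open>Speed v(beta) of the biased random walk on the random spanning tree of the
ladder, given via the explicit formula for 1/v, for beta in (1, 1/alpha).\<close>

definition ladder_inv_speed :: "real \<Rightarrow> real \<Rightarrow> real" where
  "ladder_inv_speed \<alpha> \<beta> =
     (let sp = (1 - \<alpha>) / (1 - \<alpha> * \<beta>);
          sm = (1 - \<alpha>) / (1 - \<alpha> / \<beta>);
          C  = 2 * \<beta> / (\<beta> - 1) - (\<beta> - \<alpha>) / (\<beta> - \<alpha>^2)
      in (\<beta> + 1) / (\<beta> - 1)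
         + (1 - \<alpha>) / (1 + \<alpha>) *
           ((\<beta> + 3) / (2 * (\<beta> - 1))
            + \<beta> * (\<beta> + 1) / (\<beta> - 1)^2 * (sp - sm)
            + C * sm))"

definition ladder_speed :: "real \<Rightarrow> real \<Rightarrow> real" where
  "ladder_speed \<alpha> \<beta> = 1 / ladder_inv_speed \<alpha> \<beta>"

end

theory Submission
  imports Defs
begin

text \<open>Write \<open>f = 1/v\<close>. On \<open>(1, 1/\<alpha>)\<close> one has \<open>f(\<beta>) \<ge> \<alpha>(1-\<alpha>)\<^sup>2 / ((1+\<alpha>)(1-\<alpha>\<beta>))\<close>, so
  \<open>v\<close> is positive, continuous and tends to \<open>0\<close> as \<open>\<beta> \<rightarrow> 1/\<alpha>\<close>; hence \<open>v\<close> attains its maximum.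
  The derivative of \<open>f\<close> is a positive multiple of a polynomial \<open>N(\<alpha>,\<beta>)\<close>. Where \<open>\<alpha>\<beta>\<^sup>2 \<le> 1\<close>,
  put \<open>u = 1/(\<alpha>\<beta>\<^sup>2) \<ge> 1\<close>: eliminating \<open>\<alpha>\<close> and shifting \<open>\<beta> = 1+x\<close>, \<open>u = 1+y\<close> turns
  \<open>\<beta>\<^sup>1\<^sup>8 u\<^sup>9 N\<close> into \<open>-S(x,y)\<close> for a polynomial \<open>S\<close> with nonnegative coefficients and a
  positive \<open>x\<^sup>6\<close> coefficient. So \<open>f' < 0\<close>, i.e. \<open>v' > 0\<close>, on \<open>(1, 1/\<surd>\<alpha>]\<close>; since \<open>v\<close> still
  increases just to the right of \<open>1/\<surd>\<alpha>\<close>, no maximiser can lie at or left of it.\<close>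

lemma continuous_Ioo_attains_sup:
  fixes v :: "real \<Rightarrow> real"
  assumes "l < c" "c < r"
    and cont: "\<And>x. x \<in> {l<..<r} \<Longrightarrow> isCont v x"
    and left: "\<And>x. x \<in> {l<..c} \<Longrightarrow> v x \<le> v c"
    and right: "eventually (\<lambda>x. v x \<le> v c) (at_left r)"
  shows "\<exists>m\<in>{l<..<r}. \<forall>x\<in>{l<..<r}. v x \<le> v m"
proof -
  obtain q where "q < r" and q: "\<And>x. q < x \<Longrightarrow> x < r \<Longrightarrow> v x \<le> v c"
    using right by (auto simp: eventually_at_left_field)
  define q' where "q' = max c q"
  have "q' < r" "c \<le> q'" "{c..q'} \<subseteq> {l<..<r}"
    using \<open>q < r\<close> assms(1,2) by (auto simp: q'_def)
  moreover have "continuous_on {c..q'} v"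
    using \<open>{c..q'} \<subseteq> {l<..<r}\<close> cont by (blast intro: continuous_at_imp_continuous_on)
  ultimately have "\<exists>m\<in>{c..q'}. \<forall>y\<in>{c..q'}. v y \<le> v m"
    by (intro continuous_attains_sup) auto
  then obtain m where m: "m \<in> {c..q'}" "\<And>y. y \<in> {c..q'} \<Longrightarrow> v y \<le> v m"
    by blast
  have "v x \<le> v m" if "x \<in> {l<..<r}" for x
  proof -
    have "v c \<le> v m" using m(2) \<open>c \<le> q'\<close> by simp
    moreover have "x \<le> c \<or> x \<in> {c..q'} \<or> q < x \<and> x < r"
      using that by (auto simp: q'_def)
    ultimately show ?thesis using left q m(2) that by fastforce
  qed
  then show ?thesis using m(1) \<open>{c..q'} \<subseteq> {l<..<r}\<close> by blast
qed

lemma maximizer_gt_of_deriv_pos: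
  fixes v :: "real \<Rightarrow> real"
  assumes "c < r" and deriv: "DERIV v c :> D" "0 < D"
    and left: "\<And>x. x \<in> {l<..c} \<Longrightarrow> v x \<le> v c"
    and m: "m \<in> {l<..<r}" "\<forall>x\<in>{l<..<r}. v x \<le> v m"
  shows "c < m"
proof (rule ccontr)
  assume "\<not> c < m"
  obtain d where "0 < d" and inc: "\<And>h. 0 < h \<Longrightarrow> h < d \<Longrightarrow> v c < v (c + h)"
    using DERIV_pos_inc_right[OF deriv] by blast
  define h where "h = min (d/2) ((r - c)/2)"
  have "0 < h" "h < d" "c + h < r"
    using \<open>0 < d\<close> \<open>c < r\<close> unfolding h_def min_def by (auto simp: field_simps)
  then have "v c < v (c + h)" and "c + h \<in> {l<..<r}"
    using inc m(1) \<open>\<not> c < m\<close> by auto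
  moreover have "v m \<le> v c"
    using left m(1) \<open>\<not> c < m\<close> by simp
  ultimately show False using m(2) by fastforce
qed

lemma ladder_param_bounds:
  fixes a b :: real
  assumes "0 < a" "a < 1" "1 < b" "b < 1/a"
  shows "a*b < 1" "a^2 < b" "a < b"
proof -
  show "a*b < 1" using assms by (simp add: field_simps)
  have "a^2 < a" using assms by (simp add: power2_eq_square)
  then show "a^2 < b" using assms by simp
  show "a < b" using assms by simp
qed

definition ladder_inv_speed_alt :: "real \<Rightarrow> real \<Rightarrow> real" where
  "ladder_inv_speed_alt a b = (b+1)/(b-1) + (1-a)/(1+a) *
     ((b+3)/(2*(b-1)) + a*(1-a)*(b*(b+1)^2/((b-1)*(1-a*b)*(b-a)))
      + (2*(1-a)*(b^2/((b-1)*(b-a))) - (1-a)*(b/(b-a^2))))"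

lemma ladder_inv_speed_eq_alt:
  assumes "0 < a" "a < 1" "1 < b" "b < 1/a"
  shows "ladder_inv_speed a b = ladder_inv_speed_alt a b"
proof -
  define p q r s where "p = b - 1" and "q = 1 - a*b" and "r = b - a" and "s = b - a^2"
  have nz: "p \<noteq> 0" "q \<noteq> 0" "r \<noteq> 0" "s \<noteq> 0" "b \<noteq> 0"
    using assms ladder_param_bounds[OF assms] by (auto simp: p_def q_def r_def s_def)
  have sm: "1 - a/b = r/b"
    using nz unfolding r_def by (simp add: field_simps)
  have sp_sm: "b*(b+1)/p^2 * ((1-a)/q - (1-a)/(r/b)) = a*(1-a)*(b*(b+1)^2/(p*q*r))"
    using nz apply (simp add: field_simps) unfolding p_def q_def r_def by algebra
  have C_sm: "(2*b/p - r/s) * ((1-a)/(r/b)) = 2*(1-a)*(b^2/(p*r)) - (1-a)*(b/s)"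
    using nz by (simp add: field_simps) algebra
  show ?thesis
    unfolding ladder_inv_speed_def ladder_inv_speed_alt_def Let_def sm
    unfolding p_def[symmetric] q_def[symmetric] r_def[symmetric] s_def[symmetric] C_sm sp_sm ..
qed

lemma ladder_s_term_lower_bound:
  fixes a b :: real
  assumes "0 < a" "a < 1" "1 < b" "b < 1/a"
  shows "a*(1-a)/(1-a*b) \<le> a*(1-a)*(b*(b+1)^2/((b-1)*(1-a*b)*(b-a)))"
proof -
  have q: "0 < 1 - a*b" "0 < b - a" "0 < b - 1"
    using assms ladder_param_bounds[OF assms] by auto
  have "(b-1)*(b-a) \<le> b*b"
    using q assms by (intro mult_mono) auto
  also have "b*1 \<le> (b+1)*(b+1)"
    using assms by (intro mult_mono) auto
  then have "b*b \<le> b*(b+1)^2"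
    using assms by (intro mult_left_mono) (auto simp: power2_eq_square)
  finally have "1 \<le> b*(b+1)^2/((b-1)*(b-a))"
    using q by (simp add: le_divide_eq)
  then have "1/(1-a*b) \<le> b*(b+1)^2/((b-1)*(b-a))/(1-a*b)"
    using q by (intro divide_right_mono) auto
  also have "\<dots> = b*(b+1)^2/((b-1)*(1-a*b)*(b-a))"
    by (simp add: mult_ac)
  finally have "a*(1-a)*(1/(1-a*b)) \<le> a*(1-a)*(b*(b+1)^2/((b-1)*(1-a*b)*(b-a)))"
    using assms by (intro mult_left_mono) auto
  then show ?thesis
    by simp
qed

lemma ladder_C_term_nonneg:
  fixes a b :: real
  assumes "0 < a" "a < 1" "1 < b" "b < 1/a"
  shows "(1-a)*(b/(b-a^2)) \<le> 2*(1-a)*(b^2/((b-1)*(b-a)))"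
proof -
  have q: "0 < b - a" "0 < b - 1" "0 < b - a^2"
    using assms ladder_param_bounds[OF assms] by auto
  have "b/(b-a^2) \<le> b/(b-a)"
    using q assms by (intro divide_left_mono) (auto simp: power2_eq_square)
  also have "\<dots> \<le> (2*b^2/(b-1))/(b-a)"
  proof -
    have "b*(b-1) \<le> 2*b^2"
      using assms by (simp add: power2_eq_square algebra_simps)
    then have "b \<le> 2*b^2/(b-1)"
      using q by (simp add: le_divide_eq)
    then show ?thesis
      using q by (intro divide_right_mono) auto
  qed
  also have "\<dots> = 2*(b^2/((b-1)*(b-a)))"
    by simp
  finally have "(1-a)*(b/(b-a^2)) \<le> (1-a)*(2*(b^2/((b-1)*(b-a))))"
    using assms by (intro mult_left_mono) auto
  then show ?thesis
    by (simp only: mult.assoc mult.left_commute)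
qed

lemma ladder_inv_speed_lower_bound:
  assumes "0 < a" "a < 1" "1 < b" "b < 1/a"
  shows "a*(1-a)^2 / ((1+a)*(1-a*b)) \<le> ladder_inv_speed a b"
proof -
  have "0 < (b+1)/(b-1)" "0 < (b+3)/(2*(b-1))"
    using assms by auto
  with ladder_s_term_lower_bound[OF assms] ladder_C_term_nonneg[OF assms]
  have "a*(1-a)/(1-a*b) \<le> (b+3)/(2*(b-1))
      + a*(1-a)*(b*(b+1)^2/((b-1)*(1-a*b)*(b-a)))
      + (2*(1-a)*(b^2/((b-1)*(b-a))) - (1-a)*(b/(b-a^2)))" (is "_ \<le> ?S")
    by linarith
  then have "(1-a)/(1+a)*(a*(1-a)/(1-a*b)) \<le> (1-a)/(1+a) * ?S"
    using assms by (intro mult_left_mono) auto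
  also have "\<dots> = ladder_inv_speed_alt a b - (b+1)/(b-1)"
    unfolding ladder_inv_speed_alt_def by simp
  finally have "(1-a)/(1+a)*(a*(1-a)/(1-a*b)) \<le> ladder_inv_speed_alt a b - (b+1)/(b-1)" .
  moreover have "(1-a)/(1+a)*(a*(1-a)/(1-a*b)) = a*(1-a)^2 / ((1+a)*(1-a*b))"
    by (simp add: power2_eq_square)
  ultimately show ?thesis
    using \<open>0 < (b+1)/(b-1)\<close> ladder_inv_speed_eq_alt[OF assms] by linarith
qed

lemma ladder_inv_speed_pos:
  assumes "0 < a" "a < 1" "1 < b" "b < 1/a"
  shows "0 < ladder_inv_speed a b"
proof -
  have "0 < a*(1-a)^2 / ((1+a)*(1-a*b))"
    using assms ladder_param_bounds[OF assms] by simp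
  then show ?thesis
    using ladder_inv_speed_lower_bound[OF assms] by linarith
qed

lemma eventually_ladder_speed_le_at_left:
  assumes "0 < a" "a < 1" "0 < y"
  shows "eventually (\<lambda>b. ladder_speed a b \<le> y) (at_left (1/a))"
proof -
  let ?g = "\<lambda>b. (1+a)*(1-a*b) / (a*(1-a)^2)"
  have "(?g \<longlongrightarrow> ?g (1/a)) (at_left (1/a))"
    using assms by (intro tendsto_intros) auto
  moreover have "?g (1/a) = 0"
  proof -
    have "1 - a*(1/a) = 0" using assms by simp
    then show ?thesis by simp
  qed
  ultimately have "eventually (\<lambda>b. ?g b < y) (at_left (1/a))"
    using assms order_tendstoD(2) by metis
  moreover have "eventually (\<lambda>b. b \<in> {1<..<1/a}) (at_left (1/a))"
    using assms by (intro eventually_at_left_real) simp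
  ultimately show ?thesis
  proof eventually_elim
    case (elim b)
    then have b: "1 < b" "b < 1/a" by auto
    have pos: "0 < a*(1-a)^2 / ((1+a)*(1-a*b))"
      using assms ladder_param_bounds[OF assms(1,2) b] by simp
    have "ladder_speed a b \<le> 1 / (a*(1-a)^2 / ((1+a)*(1-a*b)))"
      unfolding ladder_speed_def
      by (rule divide_left_mono[OF ladder_inv_speed_lower_bound[OF assms(1,2) b] zero_le_one
            mult_pos_pos[OF ladder_inv_speed_pos[OF assms(1,2) b] pos]])
    also have "\<dots> = ?g b" by simp
    finally show ?case using elim by simp
  qed
qed

definition ladder_deriv_numer :: "real \<Rightarrow> real \<Rightarrow> real" where
  "ladder_deriv_numer a b =
       - 4*(1-a*b)^2*(b-a)^2*(b-a^2)^2
     + (1-a)^2*a*(((b+1)^2+2*b*(b+1))*((b-1)*(1-a*b)*(b-a))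
          - b*(b+1)^2*((1-a*b)*(b-a) - a*(b-1)*(b-a) + (b-1)*(1-a*b)))*(b-a^2)^2
     + 2*(1-a)^2*(2*b*((b-1)*(b-a)) - b^2*(2*b-1-a))*(1-a*b)^2*(b-a^2)^2
     + (1-a)^2*a^2*(b-1)^2*(1-a*b)^2*(b-a)^2"

lemma ladder_deriv_common_denom:
  fixes a b p q r w :: real
  assumes defs: "p = b - 1" "q = 1 - a*b" "r = b - a" "w = b - a^2"
    and nz: "p \<noteq> 0" "q \<noteq> 0" "r \<noteq> 0" "w \<noteq> 0" "1 + a \<noteq> 0"
  shows "(1*p - (b+1)*1)/(p*p) + (1-a)/(1+a) *
     ((1*(2*p) - (b+3)*2)/((2*p)*(2*p))
      + a*(1-a)*((((b+1)^2+2*b*(b+1))*(p*q*r) - b*(b+1)^2*(q*r - a*p*r + p*q)) / ((p*q*r)*(p*q*r)))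
      + (2*(1-a)*(((2*b)*(p*r) - b^2*(2*b-1-a)) / ((p*r)*(p*r)))
         - (1-a)*((1*w - b*1)/(w*w))))
    = ladder_deriv_numer a b / ((1+a)*(p^2*q^2*r^2*w^2))" (is "?D = _")
proof -
  define L where "L = p^2*q^2*r^2*w^2"
  have distrib: "(x1 + (1-a)/(1+a)*(x2 + c*x3 + (e*x4 - f*x5))) * ((1+a)*L)
      = (1+a)*(x1*L) + (1-a)*(x2*L + c*(x3*L) + (e*(x4*L) - f*(x5*L)))"
    for x1 x2 x3 x4 x5 c e f :: real
    using nz(5) by (simp add: field_simps)
  have c1: "(1*p - (b+1)*1)/(p*p) * L = (1*p - (b+1)*1)*(q^2*r^2*w^2)"
    and c2: "(1*(2*p) - (b+3)*2)/((2*p)*(2*p)) * L = (1*(2*p) - (b+3)*2)*(q^2*r^2*w^2)/4"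
    and c3: "(((b+1)^2+2*b*(b+1))*(p*q*r) - b*(b+1)^2*(q*r - a*p*r + p*q)) / ((p*q*r)*(p*q*r)) * L
       = (((b+1)^2+2*b*(b+1))*(p*q*r) - b*(b+1)^2*(q*r - a*p*r + p*q))*w^2"
    and c4: "((2*b)*(p*r) - b^2*(2*b-1-a)) / ((p*r)*(p*r)) * L
       = ((2*b)*(p*r) - b^2*(2*b-1-a))*(q^2*w^2)"
    and c5: "(1*w - b*1)/(w*w) * L = (1*w - b*1)*(p^2*q^2*r^2)"
    using nz unfolding L_def by (simp_all add: field_simps power2_eq_square)
  have numer: "ladder_deriv_numer a b = - 4*q^2*r^2*w^2
      + (1-a)^2*a*(((b+1)^2+2*b*(b+1))*(p*q*r) - b*(b+1)^2*(q*r - a*p*r + p*q))*w^2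
      + 2*(1-a)^2*(2*b*(p*r) - b^2*(2*b-1-a))*q^2*w^2
      + (1-a)^2*a^2*p^2*q^2*r^2"
    unfolding ladder_deriv_numer_def defs by simp
  have "?D * ((1+a)*L) = ladder_deriv_numer a b"
    unfolding distrib c1 c2 c3 c4 c5 numer unfolding defs by algebra
  then show ?thesis
    using nz unfolding L_def by (simp add: eq_divide_eq)
qed

lemma ladder_inv_speed_alt_deriv:
  assumes "0 < a" "a < 1" "1 < b" "b < 1/a"
  shows "DERIV (ladder_inv_speed_alt a) b :>
           ladder_deriv_numer a b / ((1+a)*((b-1)^2*(1-a*b)^2*(b-a)^2*(b-a^2)^2))"
proof -
  define p q r w where "p = b - 1" and "q = 1 - a*b" and "r = b - a" and "w = b - a^2"
  have nz: "p \<noteq> 0" "q \<noteq> 0" "r \<noteq> 0" "w \<noteq> 0" "1 + a \<noteq> 0"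
    using assms ladder_param_bounds[OF assms] by (auto simp: p_def q_def r_def w_def)
  have d1: "DERIV (\<lambda>x. (x+1)/(x-1)) b :> (1*p - (b+1)*1)/(p*p)"
    using nz(1) unfolding p_def by (intro DERIV_divide derivative_eq_intros) auto
  have d2: "DERIV (\<lambda>x. (x+3)/(2*(x-1))) b :> (1*(2*p) - (b+3)*2)/((2*p)*(2*p))"
    using nz(1) unfolding p_def by (intro DERIV_divide derivative_eq_intros) auto
  have d3: "DERIV (\<lambda>x. x*(x+1)^2/((x-1)*(1-a*x)*(x-a))) b :>
      (((b+1)^2+2*b*(b+1))*(p*q*r) - b*(b+1)^2*(q*r - a*p*r + p*q)) / ((p*q*r)*(p*q*r))"
  proof -
    have "DERIV (\<lambda>x. x*(x+1)^2) b :> (b+1)^2+2*b*(b+1)"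
      by (rule derivative_eq_intros refl | simp)+
    moreover have "DERIV (\<lambda>x. (x-1)*(1-a*x)*(x-a)) b :> q*r - a*p*r + p*q"
      unfolding p_def q_def r_def by (rule derivative_eq_intros refl | simp)+ algebra
    ultimately show ?thesis
      using DERIV_divide nz unfolding p_def q_def r_def by fastforce
  qed
  have d4: "DERIV (\<lambda>x. x^2/((x-1)*(x-a))) b :> ((2*b)*(p*r) - b^2*(2*b-1-a)) / ((p*r)*(p*r))"
  proof -
    have "DERIV (\<lambda>x. x^2) b :> 2*b"
      by (rule derivative_eq_intros refl | simp)+
    moreover have "DERIV (\<lambda>x. (x-1)*(x-a)) b :> 2*b-1-a"
      by (rule derivative_eq_intros refl | simp)+
    ultimately show ?thesis
      using DERIV_divide nz unfolding p_def r_def by fastforce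
  qed
  have d5: "DERIV (\<lambda>x. x/(x-a^2)) b :> (1*w - b*1)/(w*w)"
    using nz(4) unfolding w_def by (intro DERIV_divide derivative_eq_intros) auto
  have "DERIV (ladder_inv_speed_alt a) b :> (1*p - (b+1)*1)/(p*p) + (1-a)/(1+a) *
     ((1*(2*p) - (b+3)*2)/((2*p)*(2*p))
      + a*(1-a)*((((b+1)^2+2*b*(b+1))*(p*q*r) - b*(b+1)^2*(q*r - a*p*r + p*q)) / ((p*q*r)*(p*q*r)))
      + (2*(1-a)*(((2*b)*(p*r) - b^2*(2*b-1-a)) / ((p*r)*(p*r)))
         - (1-a)*((1*w - b*1)/(w*w))))"
    unfolding ladder_inv_speed_alt_def[abs_def]
    by (intro DERIV_add DERIV_cmult DERIV_diff d1 d2 d3 d4 d5)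
  then show ?thesis
    unfolding ladder_deriv_common_denom[OF p_def q_def r_def w_def nz]
    unfolding p_def q_def r_def w_def .
qed

lemma ladder_inv_speed_deriv:
  assumes "0 < a" "a < 1" "1 < b" "b < 1/a"
  shows "DERIV (ladder_inv_speed a) b :>
           ladder_deriv_numer a b / ((1+a)*((b-1)^2*(1-a*b)^2*(b-a)^2*(b-a^2)^2))"
proof (rule has_field_derivative_transform_within_open[OF ladder_inv_speed_alt_deriv[OF assms]])
  show "open {1<..<1/a}" "b \<in> {1<..<1/a}"
    using assms by auto
  show "ladder_inv_speed_alt a x = ladder_inv_speed a x" if "x \<in> {1<..<1/a}" for x
    using ladder_inv_speed_eq_alt[OF assms(1,2)] that by auto
qed

definition ladder_numer_expansion :: "real \<Rightarrow> real \<Rightarrow> real \<Rightarrow> real" where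
  "ladder_numer_expansion t b u =
       b^18*u^9*(- 6*b^4)
       + t*b^16*u^8*(12*b^3 - b^4 + 10*b^5 + b^6)
       + t^2*b^14*u^7*(- 2*b^2 + 6*b^3 - 15*b^4 - 5*b^6)
       + t^3*b^12*u^6*(- 2*b - 24*b^2 + 6*b^3 - 10*b^4 - 2*b^6)
       + t^4*b^10*u^5*(1 + 8*b + b^2 + 34*b^3 - 8*b^4 + 12*b^5 + 4*b^6)
       + t^5*b^8*u^4*(- 2 + 16*b - 11*b^2 + 2*b^3 - 12*b^4 + 6*b^5 - 3*b^6)
       + t^6*b^6*u^3*(- 2 - 4*b - 26*b^2 + 10*b^3 - 7*b^4 - 4*b^5 + b^6)
       + t^7*b^4*u^2*(- 2 + 2*b + 10*b^2 + 10*b^3 - 4*b^4)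
       + t^8*b^2*u*(1 + 4*b - 5*b^2 - 2*b^3 + 4*b^4)
       + t^9*(- 3*b^2 + 2*b^3 - b^4)"

definition ladder_numer_shifted :: "real \<Rightarrow> real \<Rightarrow> real" where
  "ladder_numer_shifted x y =
       32*y^6 + 56*y^7 + 32*y^8 + 6*y^9
       + 416*x*y^5 + 1336*x*y^6 + 1532*x*y^7 + 748*x*y^8 + 132*x*y^9
       + 2168*x^2*y^4 + 10958*x^2*y^5 + 20919*x^2*y^6 + 19021*x^2*y^7 + 8281*x^2*y^8 + 1386*x^2*y^9
       + 5744*x^3*y^3 + 43644*x^3*y^4 + 127140*x^3*y^5 + 185646*x^3*y^6 + 144996*x^3*y^7
       + 57832*x^3*y^8 + 9240*x^3*y^9
       + 8028*x^4*y^2 + 93486*x^4*y^3 + 405527*x^4*y^4 + 890930*x^4*y^5 + 1097443*x^4*y^6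
       + 768869*x^4*y^7 + 286178*x^4*y^8 + 43890*x^4*y^9
       + 5440*x^5*y + 107864*x^5*y^2 + 716620*x^5*y^3 + 2335346*x^5*y^4 + 4297706*x^5*y^5
       + 4701324*x^5*y^6 + 3034944*x^5*y^7 + 1068180*x^5*y^8 + 158004*x^5*y^9
       + 61100*x^6*y + 690844*x^6*y^2 + 3450468*x^6*y^3 + 9406657*x^6*y^4 + 15318386*x^6*y^5
       + 15351618*x^6*y^6 + 9297812*x^6*y^7 + 3125025*x^6*y^8 + 447678*x^6*y^9
       + 12600*x^7 + 330048*x^7*y + 2803932*x^7*y^2 + 11727812*x^7*y^3 + 28289058*x^7*y^4
       + 42132584*x^7*y^5 + 39484038*x^7*y^6 + 22724816*x^7*y^7 + 7348896*x^7*y^8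
       + 1023264*x^7*y^9
       + 58664*x^8 + 1137106*x^8*y + 8084860*x^8*y^2 + 29950792*x^8*y^3 + 66101300*x^8*y^4
       + 91999134*x^8*y^5 + 81779880*x^8*y^6 + 45150948*x^8*y^7 + 14131896*x^8*y^8
       + 1918620*x^8*y^9
       + 174048*x^9 + 2795300*x^9*y + 17591652*x^9*y^2 + 59676644*x^9*y^3 + 123149740*x^9*y^4
       + 162561208*x^9*y^5 + 138489320*x^9*y^6 + 73870472*x^9*y^7 + 22483384*x^9*y^8
       + 2984520*x^9*y^9
       + 368056*x^10 + 5198118*x^10*y + 29937749*x^10*y^2 + 95018845*x^10*y^3
       + 186080069*x^10*y^4 + 235443703*x^10*y^5 + 193707696*x^10*y^6 + 100374326*x^10*y^7
       + 29821298*x^10*y^8 + 3879876*x^10*y^9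
       + 587792*x^11 + 7565040*x^11*y + 40741406*x^11*y^2 + 122762168*x^11*y^3
       + 230554028*x^11*y^4 + 281795104*x^11*y^5 + 225201990*x^11*y^6 + 113852024*x^11*y^7
       + 33121712*x^11*y^8 + 4232592*x^11*y^9
       + 732625*x^12 + 8792980*x^12*y + 44935911*x^12*y^2 + 129881399*x^12*y^3
       + 235718958*x^12*y^4 + 279932639*x^12*y^5 + 218278450*x^12*y^6 + 108033302*x^12*y^7
       + 30854252*x^12*y^8 + 3879876*x^12*y^9
       + 726154*x^13 + 8256026*x^13*y + 40456784*x^13*y^2 + 113016580*x^13*y^3
       + 199345826*x^13*y^4 + 231041418*x^13*y^5 + 176392092*x^13*y^6 + 85702608*x^13*y^7
       + 24080296*x^13*y^8 + 2984520*x^13*y^9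
       + 577739*x^14 + 6292108*x^14*y + 29792000*x^14*y^2 + 80890376*x^14*y^3
       + 139272553*x^14*y^4 + 158074676*x^14*y^5 + 118488666*x^14*y^6 + 56639412*x^14*y^7
       + 15684234*x^14*y^8 + 1918620*x^14*y^9
       + 369758*x^15 + 3889008*x^15*y + 17894654*x^15*y^2 + 47428544*x^15*y^3 + 79978394*x^15*y^4
       + 89135648*x^15*y^5 + 65741418*x^15*y^6 + 30972944*x^15*y^7 + 8465184*x^15*y^8
       + 1023264*x^15*y^9
       + 189524*x^16 + 1936830*x^16*y + 8699120*x^16*y^2 + 22582316*x^16*y^3 + 37394828*x^16*y^4
       + 41010524*x^16*y^5 + 29813400*x^16*y^6 + 13863740*x^16*y^7 + 3744216*x^16*y^8
       + 447678*x^16*y^9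
       + 76908*x^17 + 767232*x^17*y + 3375240*x^17*y^2 + 8604420*x^17*y^3 + 14021064*x^17*y^4
       + 15156588*x^17*y^5 + 10875432*x^17*y^6 + 4997340*x^17*y^7 + 1334940*x^17*y^8
       + 158004*x^17*y^9
       + 24204*x^18 + 236553*x^18*y + 1022051*x^18*y^2 + 2564007*x^18*y^3 + 4118235*x^18*y^4
       + 4393849*x^18*y^5 + 3115233*x^18*y^6 + 1415781*x^18*y^7 + 374357*x^18*y^8
       + 43890*x^18*y^9
       + 5708*x^19 + 54804*x^19*y + 233044*x^19*y^2 + 576268*x^19*y^3 + 913500*x^19*y^4
       + 962948*x^19*y^5 + 675164*x^19*y^6 + 303684*x^19*y^7 + 79528*x^19*y^8 + 9240*x^19*y^9
       + 951*x^20 + 8989*x^20*y + 37681*x^20*y^2 + 91959*x^20*y^3 + 144011*x^20*y^4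
       + 150101*x^20*y^5 + 104139*x^20*y^6 + 46381*x^20*y^7 + 12034*x^20*y^8 + 1386*x^20*y^9
       + 100*x^21 + 932*x^21*y + 3856*x^21*y^2 + 9296*x^21*y^3 + 14392*x^21*y^4 + 14840*x^21*y^5
       + 10192*x^21*y^6 + 4496*x^21*y^7 + 1156*x^21*y^8 + 132*x^21*y^9
       + 5*x^22 + 46*x^22*y + 188*x^22*y^2 + 448*x^22*y^3 + 686*x^22*y^4 + 700*x^22*y^5
       + 476*x^22*y^6 + 208*x^22*y^7 + 53*x^22*y^8 + 6*x^22*y^9
       + 1300*x^6"

lemma ladder_deriv_numer_expansion:
  "b^18 * u^9 * ladder_deriv_numer a b = ladder_numer_expansion (a*b^2*u) b u"
  unfolding ladder_deriv_numer_def ladder_numer_expansion_def by algebra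

lemma ladder_numer_expansion_shift:
  "ladder_numer_expansion 1 (1+x) (1+y) = - ladder_numer_shifted x y"
  unfolding ladder_numer_expansion_def power_one mult_1 ladder_numer_shifted_def by algebra

lemma ladder_numer_shifted_pos:
  assumes "0 < x" "0 \<le> y"
  shows "0 < ladder_numer_shifted x y"
  unfolding ladder_numer_shifted_def
  by (rule add_nonneg_pos; (intro add_nonneg_nonneg mult_nonneg_nonneg zero_le_power)?)
     (use assms in simp_all)

lemma ladder_deriv_numer_neg:
  assumes "0 < a" "1 < b" "a*b^2 \<le> 1"
  shows "ladder_deriv_numer a b < 0"
proof -
  define u where "u = 1/(a*b^2)"
  have "0 < a*b^2" using assms by simp
  then have abu: "a*b^2*u = 1" and "1 \<le> u"
    using assms unfolding u_def by (simp_all add: field_simps)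
  have "b^18 * u^9 * ladder_deriv_numer a b = ladder_numer_expansion 1 (1+(b-1)) (1+(u-1))"
    unfolding ladder_deriv_numer_expansion abu by simp
  also have "\<dots> = - ladder_numer_shifted (b-1) (u-1)"
    by (rule ladder_numer_expansion_shift)
  also have "\<dots> < 0"
    using ladder_numer_shifted_pos assms \<open>1 \<le> u\<close> by simp
  finally have "b^18 * u^9 * ladder_deriv_numer a b < 0" .
  moreover have "0 < b^18 * u^9" using assms \<open>1 \<le> u\<close> by simp
  ultimately show ?thesis
    using mult_less_0_iff[of "b^18 * u^9" "ladder_deriv_numer a b"] by linarith
qed

lemma ladder_speed_deriv_pos:
  assumes "0 < a" "a < 1" "1 < b" "a*b^2 \<le> 1"
  shows "\<exists>D. DERIV (ladder_speed a) b :> D \<and> 0 < D"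
proof -
  have "a*b < a*b^2"
    using assms by (simp add: power2_eq_square)
  then have "a*b < 1"
    using assms(4) by linarith
  then have b: "1 < b" "b < 1/a"
    using assms by (simp_all add: field_simps)
  let ?f = "ladder_inv_speed a b" and ?N = "ladder_deriv_numer a b"
    and ?Q = "(1+a)*((b-1)^2*(1-a*b)^2*(b-a)^2*(b-a^2)^2)"
  have "0 < ?Q"
    using assms ladder_param_bounds[OF assms(1,2) b] by simp
  then have "?N / ?Q < 0"
    using ladder_deriv_numer_neg[OF assms(1,3,4)] by (simp add: divide_neg_pos)
  moreover have "0 < ?f"
    using ladder_inv_speed_pos[OF assms(1,2) b] .
  ultimately have "0 < (0 * ?f - 1 * (?N / ?Q)) / (?f * ?f)"
    by (intro divide_pos_pos) auto
  moreover have "DERIV (ladder_speed a) b :> (0 * ?f - 1 * (?N / ?Q)) / (?f * ?f)"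
    unfolding ladder_speed_def[abs_def]
    by (rule DERIV_divide[OF DERIV_const ladder_inv_speed_deriv[OF assms(1,2) b]])
      (use \<open>0 < ?f\<close> in simp)
  ultimately show ?thesis
    by blast
qed

lemma ladder_speed_isCont:
  assumes "0 < a" "a < 1" "1 < b" "b < 1/a"
  shows "isCont (ladder_speed a) b"
  unfolding ladder_speed_def[abs_def]
  using DERIV_isCont[OF ladder_inv_speed_deriv[OF assms]] ladder_inv_speed_pos[OF assms]
  by (intro continuous_intros) auto

lemma inv_sqrt_bounds:
  fixes a :: real
  assumes "0 < a" "a < 1"
  shows "1 < 1 / sqrt a" "1 / sqrt a < 1/a" "a * (1 / sqrt a)^2 = 1"
proof -
  have "0 < sqrt a" "sqrt a < 1" using assms by auto
  moreover have "sqrt a * sqrt a = a" using assms by simp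
  ultimately have "a < sqrt a"
    using mult_strict_left_mono[of "sqrt a" 1 "sqrt a"] by simp
  with \<open>0 < sqrt a\<close> \<open>sqrt a < 1\<close> assms show "1 < 1 / sqrt a" "1 / sqrt a < 1/a"
    by (simp_all add: field_simps)
  show "a * (1 / sqrt a)^2 = 1"
    using assms by (simp add: power_divide)
qed

theorem mainTheorem5:
  fixes \<alpha> :: real
  assumes "0 < \<alpha>" and "\<alpha> < 1"
  shows "(\<exists>D. (ladder_speed \<alpha> has_real_derivative D) (at (1 / sqrt \<alpha>)) \<and> D > 0)
       \<and> (\<exists>\<beta>m\<in>{1<..<1/\<alpha>}. \<forall>\<beta>\<in>{1<..<1/\<alpha>}. ladder_speed \<alpha> \<beta> \<le> ladder_speed \<alpha> \<beta>m)
       \<and> (\<forall>\<beta>m\<in>{1<..<1/\<alpha>}. (\<forall>\<beta>\<in>{1<..<1/\<alpha>}. ladder_speed \<alpha> \<beta> \<le> ladder_speed \<alpha> \<beta>m)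
             \<longrightarrow> 1 / sqrt \<alpha> < \<beta>m)"
proof -
  define c where "c = 1 / sqrt \<alpha>"
  have c: "1 < c" "c < 1/\<alpha>" "\<alpha> * c^2 = 1"
    using inv_sqrt_bounds[OF assms] unfolding c_def by auto
  have deriv_pos: "\<exists>D. DERIV (ladder_speed \<alpha>) b :> D \<and> 0 < D" if "1 < b" "b \<le> c" for b
  proof -
    have "\<alpha> * b^2 \<le> \<alpha> * c^2"
      using that assms by (intro mult_left_mono power_mono) auto
    then show ?thesis
      using ladder_speed_deriv_pos[OF assms \<open>1 < b\<close>] c(3) by simp
  qed
  have left: "ladder_speed \<alpha> b \<le> ladder_speed \<alpha> c" if "b \<in> {1<..c}" for b
    using DERIV_pos_imp_increasing[of b c "ladder_speed \<alpha>"] deriv_pos that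
    by (cases "b = c") (auto intro: less_imp_le)
  obtain D where D: "DERIV (ladder_speed \<alpha>) c :> D" "0 < D"
    using deriv_pos c by blast
  have "0 < ladder_speed \<alpha> c"
    unfolding ladder_speed_def using ladder_inv_speed_pos[OF assms c(1,2)] by simp
  then have right: "eventually (\<lambda>b. ladder_speed \<alpha> b \<le> ladder_speed \<alpha> c) (at_left (1/\<alpha>))"
    by (rule eventually_ladder_speed_le_at_left[OF assms])
  have cont: "isCont (ladder_speed \<alpha>) b" if "b \<in> {1<..<1/\<alpha>}" for b
    using ladder_speed_isCont[OF assms] that by simp
  show ?thesis
    using D continuous_Ioo_attains_sup[OF c(1,2) cont left right]
      maximizer_gt_of_deriv_pos[OF c(2) D left]
    unfolding c_def by blast
qed

end
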